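(* For all $n\in\mathbb N$, \[ L^n(J)-L_0^n(J)=\sum_{j=0}^{n-1}L^j(\eta_{n-j}),\qquad\text{where }\eta_n:=L\big(L_0^{n-1}(J)\big)-L_0^n(J), \] and $\eta_n$ satisfies \[ \eta_n=\sum_{s=0}^\infty\alpha(n-1,s)\Big[\frac1N\mathrm{diag}(Q^s)+\mathrm{diag}\big(Q\,\mathrm{diag}(Q^s)J\big)-\frac{2\,\mathrm{tr}(Q^s)}{N^2}I-\frac1N\mathrm{diag}(Q^s)Q-\frac1NQ\,\mathrm{diag}(Q^s)+\frac{2\,\mathrm{tr}(Q^s)}{N^2}Q\Big]. \]
   Context: $E$ is a finite set with $N=\#E>8$ elements, listed in a fixed order; $\mathsf M_E$ is the space of complex $N\times N$ matrices indexed by $E\times E$; $|x\rangle,\langle x|$ are standard unit column/row vectors, $C^*$ is transpose. $Q$ is an irreducible stochastic matrix on $E$ with $Q(x,y)=Q(y,x)$ for all $x,y$ and $\mathrm{tr}(Q)=0$. $I$ is the identity, $J$ the matrix with all entries $1/N$, $\mathrm{diag}(C)=\sum_x|x\rangle\langle x|C|x\rangle\langle x|$. Let $(U,V)$ be random with $\mathbb P(U=x,V=y)=\frac1NQ(x,y)$, $T=I-|U\rangle\langle U|+|U\rangle\langle V|$, and $L(C)=\mathbb E[T^*CT]$. $L_0(C)=\frac{N-2}NC+\frac1N(CQ+QC)-\frac{2\,\mathrm{tr}(C)}{N^2}Q+\frac{2\,\mathrm{tr}(C)}{N^2}I$. Powers of $L$, $L_0$ are compositions ($L^0=L_0^0=$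 identity). The function $\alpha:\mathbb Z_+\times\mathbb Z_+\to\mathbb R$ is defined by $\alpha(0,s)=0$ and, for $n\in\mathbb Z_+$, $\alpha(n+1,0)=\frac2{N^2}+\alpha(n,0)+\frac2{N^2}\sum_{s\ge1}\alpha(n,s)\mathrm{tr}(Q^s)$, $\alpha(n+1,1)=-\frac2{N^2}+\frac{N-2}N\alpha(n,1)-\frac2{N^2}\sum_{s\ge1}\alpha(n,s)\mathrm{tr}(Q^s)$, $\alpha(n+1,s)=\frac{N-2}N\alpha(n,s)+\frac2N\alpha(n,s-1)$ for $s\ge2$ (so $\alpha(n,s)=0$ for $s\ge n+1$). *)

theory Defs
  imports "HOL-Analysis.Analysis"
begin

text \<open>Matrices indexed by the finite type 'e (playing the role of E), entries complex.
  Q is a real matrix; its complex version is cmat Q.\<close>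

primrec matpow :: "'a::semiring_1^'e^'e \<Rightarrow> nat \<Rightarrow> 'a^'e^'e" where
  "matpow A 0 = mat 1"
| "matpow A (Suc k) = matpow A k ** A"

definition cmat :: "real^'e^'e \<Rightarrow> complex^'e^'e" where
  "cmat A = (\<chi> i j. complex_of_real (A $ i $ j))"

definition cscale :: "complex \<Rightarrow> complex^'e^'e \<Rightarrow> complex^'e^'e" where
  "cscale c A = (\<chi> i j. c * A $ i $ j)"

definition stochastic :: "real^'e^'e \<Rightarrow> bool" where
  "stochastic Q \<longleftrightarrow> (\<forall>x y. Q $ x $ y \<ge> 0) \<and> (\<forall>x. (\<Sum>y\<in>UNIV. Q $ x $ y) = 1)"

definition irreducible_mat :: "real^'e^'e \<Rightarrow> bool" where
  "irreducible_mat Q \<longleftrightarrow> (\<forall>x y. \<exists>k. matpow Q k $ x $ y > 0)"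

definition ketbra :: "'e \<Rightarrow> 'e \<Rightarrow> complex^'e^'e" where
  "ketbra x y = (\<chi> i j. if i = x \<and> j = y then 1 else 0)"

definition Jmat :: "complex^'e^'e" where
  "Jmat = (\<chi> i j. 1 / of_nat CARD('e))"

definition diagm :: "complex^'e^'e \<Rightarrow> complex^'e^'e" where
  "diagm C = (\<Sum>x\<in>UNIV. ketbra x x ** C ** ketbra x x)"

text \<open>T for the outcome (U,V) = (x,y).\<close>
definition Tmat :: "'e \<Rightarrow> 'e \<Rightarrow> complex^'e^'e" where
  "Tmat x y = mat 1 - ketbra x x + ketbra x y"

text \<open>L(C) = E[T^* C T], with P(U=x,V=y) = Q(x,y)/N.\<close>
definition Lop :: "real^'e^'e \<Rightarrow> complex^'e^'e \<Rightarrow> complex^'e^'e" where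
  "Lop Q C = (\<Sum>x\<in>UNIV. \<Sum>y\<in>UNIV.
      (Q $ x $ y / real CARD('e)) *\<^sub>R (transpose (Tmat x y) ** C ** Tmat x y))"

definition L0op :: "real^'e^'e \<Rightarrow> complex^'e^'e \<Rightarrow> complex^'e^'e" where
  "L0op Q C = (let N = real CARD('e) in
      ((N - 2) / N) *\<^sub>R C + (1 / N) *\<^sub>R (C ** cmat Q + cmat Q ** C)
      - cscale (2 * trace C / of_real (N^2)) (cmat Q)
      + cscale (2 * trace C / of_real (N^2)) (mat 1))"

primrec alpha :: "real^'e^'e \<Rightarrow> nat \<Rightarrow> nat \<Rightarrow> real" where
  "alpha Q 0 = (\<lambda>s. 0)"
| "alpha Q (Suc n) = (\<lambda>s. let N = real CARD('e);
       S = (\<Sum>t. alpha Q n (Suc t) * trace (matpow Q (Suc t))) in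
     if s = 0 then 2 / N^2 + alpha Q n 0 + 2 / N^2 * S
     else if s = 1 then - 2 / N^2 + (N - 2) / N * alpha Q n 1 - 2 / N^2 * S
     else (N - 2) / N * alpha Q n s + 2 / N * alpha Q n (s - 1))"

definition eta :: "real^'e^'e \<Rightarrow> nat \<Rightarrow> complex^'e^'e" where
  "eta Q n = Lop Q ((L0op Q ^^ (n - 1)) Jmat) - (L0op Q ^^ n) Jmat"

definition bracket :: "real^'e^'e \<Rightarrow> nat \<Rightarrow> complex^'e^'e" where
  "bracket Q s = (let N = real CARD('e); Qs = cmat (matpow Q s);
       t = trace (matpow Q s) in
     (1 / N) *\<^sub>R diagm Qs + diagm (cmat Q ** diagm Qs ** Jmat)
     - (2 * t / N^2) *\<^sub>R mat 1 - (1 / N) *\<^sub>R (diagm Qs ** cmat Q)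
     - (1 / N) *\<^sub>R (cmat Q ** diagm Qs) + (2 * t / N^2) *\<^sub>R cmat Q)"

end

theory Submission
  imports Defs
begin

(* The first claim is a purely algebraic telescoping identity: for a linear map f and any
   map g, f^n x - g^n x = sum_{j<n} f^j (f (g^(n-j-1) x) - g^(n-j) x).  With f = L, g = L0,
   x = J the summands are exactly L^j(eta_{n-j}).
   For the second claim we compute entrywise.  Expanding E[T^* C T] gives an explicit
   entry formula for L(C) when Q is symmetric with unit row sums, hence one for the
   difference D = L - L0.  Independently, L0 maps J and the powers Q^s into the span of
   J and the powers of Q (Q commutes with its powers and fixes J), and the recursion
   defining alpha is exactly the bookkeeping of the coefficients, so
   L0^m(J) = J + sum_{s<=m} alpha(m,s) Q^s.  Finally D(J) = 0 and D(Q^s) is the bracket of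
   index s; by linearity of D, eta_{m+1} = D(L0^m J) = sum_s alpha(m,s) bracket(s), and the
   sum is finite because alpha(m,s) = 0 for s > m. *)

lemma scaleR_complex: "r *\<^sub>R (z::complex) = of_real r * z"
  by (simp add: scaleR_conv_of_real)

text \<open>The Kronecker delta, as a complex number; entries of all matrices below are
  expressed through it so that sums over the index set collapse by one rewrite.\<close>

definition kron :: "'e \<Rightarrow> 'e \<Rightarrow> complex" where
  "kron a b = (if a = b then 1 else 0)"

lemma kron_sym: "kron a b = kron b a"
  by (simp add: kron_def)

lemma sum_times_kron: "(\<Sum>l\<in>(UNIV::'e::finite set). f l * kron l a) = f a"
proof -
  have "(\<Sum>l\<in>UNIV. f l * kron l a) = (\<Sum>l\<in>UNIV. if l = a then f l else 0)"
    by (rule sum.cong) (auto simp: kron_def)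
  then show ?thesis by simp
qed

lemma sum_kron_times: "(\<Sum>l\<in>(UNIV::'e::finite set). kron l a * f l) = f a"
  using sum_times_kron[of f a] by (simp add: mult.commute)

lemma sum_kron_times': "(\<Sum>l\<in>(UNIV::'e::finite set). kron a l * f l) = f a"
  using sum_kron_times[of a f] by (simp add: kron_sym)

lemma ketbra_nth: "ketbra x y $ i $ j = kron i x * kron j y"
  by (simp add: ketbra_def kron_def)

lemma Tmat_nth: "Tmat x y $ i $ j = kron i j - kron i x * kron j x + kron i x * kron j y"
  by (simp add: Tmat_def ketbra_def mat_def kron_def)

lemma mult_ketbra_nth: "(M ** ketbra x x) $ i $ j = M $ i $ x * kron j x"
  by (simp add: matrix_matrix_mult_def ketbra_nth mult.assoc[symmetric]
      sum_distrib_right[symmetric] sum_times_kron)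

lemma ketbra_mult_nth: "(ketbra x x ** M) $ i $ j = kron i x * M $ x $ j"
  by (simp add: matrix_matrix_mult_def ketbra_nth mult.assoc sum_distrib_left[symmetric]
      sum_kron_times)

lemma diagm_nth: "diagm C $ i $ j = kron i j * C $ i $ i"
proof -
  have "diagm C $ i $ j = (\<Sum>x\<in>UNIV. kron i x * (kron j x * C $ x $ x))"
    by (simp add: diagm_def mult_ketbra_nth ketbra_mult_nth algebra_simps)
  also have "\<dots> = kron i j * C $ i $ i"
    by (simp only: sum_kron_times') (simp add: kron_def)
  finally show ?thesis .
qed

lemma mult_Tmat_nth: "(M ** Tmat x y) $ i $ j = M $ i $ j + M $ i $ x * (kron y j - kron x j)"
proof -
  have "(M ** Tmat x y) $ i $ j = (\<Sum>l\<in>UNIV. M $ i $ l * kron l j)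
      - (\<Sum>l\<in>UNIV. (M $ i $ l * kron j x) * kron l x) + (\<Sum>l\<in>UNIV. (M $ i $ l * kron j y) * kron l x)"
    by (simp add: matrix_matrix_mult_def Tmat_nth algebra_simps sum.distrib sum_subtractf)
  then show ?thesis
    by (simp only: sum_times_kron) (simp add: kron_def algebra_simps)
qed

lemma transpose_Tmat_mult_nth:
  "(transpose (Tmat x y) ** M) $ i $ j = M $ i $ j + (kron y i - kron x i) * M $ x $ j"
proof -
  have "(transpose (Tmat x y) ** M) $ i $ j = (\<Sum>l\<in>UNIV. kron l i * M $ l $ j)
      - (\<Sum>l\<in>UNIV. kron l x * (kron i x * M $ l $ j)) + (\<Sum>l\<in>UNIV. kron l x * (kron i y * M $ l $ j))"
    by (simp add: matrix_matrix_mult_def transpose_def Tmat_nth algebra_simps sum.distrib sum_subtractf)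
  then show ?thesis
    by (simp only: sum_kron_times) (simp add: kron_def algebra_simps)
qed

lemma diagm_mult_nth: "(diagm C ** M) $ i $ j = C $ i $ i * M $ i $ j"
  by (simp add: matrix_matrix_mult_def diagm_nth mult.assoc sum_kron_times')

lemma mult_diagm_nth: "(M ** diagm C) $ i $ j = M $ i $ j * C $ j $ j"
proof -
  have "(M ** diagm C) $ i $ j = (\<Sum>k\<in>UNIV. (M $ i $ k * C $ k $ k) * kron k j)"
    by (simp add: matrix_matrix_mult_def diagm_nth algebra_simps)
  then show ?thesis by (simp only: sum_times_kron)
qed

lemma cmat_nth: "cmat M $ i $ j = of_real (M $ i $ j)"
  by (simp add: cmat_def)

lemma trace_cmat: "trace (cmat M) = of_real (trace M)"
  by (simp add: trace_def cmat_def)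

text \<open>Averaging T^* C T over the second coordinate V, for any probability weights q x
  on the target, given U = x.\<close>

lemma sum_weighted_TCT:
  fixes q :: "'e::finite \<Rightarrow> complex"
  assumes q1: "(\<Sum>y\<in>UNIV. q y) = 1"
  shows "(\<Sum>y\<in>UNIV. q y * (transpose (Tmat x y) ** C ** Tmat x y) $ i $ j)
    = (C $ i $ j - C $ i $ x * kron x j - kron x i * C $ x $ j + kron x i * C $ x $ x * kron x j)
      + (C $ i $ x - C $ x $ x * kron x i) * q j + (C $ x $ j - C $ x $ x * kron x j) * q i
      + C $ x $ x * q i * kron i j"
proof -
  have TCT: "(transpose (Tmat x y) ** C ** Tmat x y) $ i $ j = C $ i $ j + C $ i $ x * (kron y j - kron x j)
      + (kron y i - kron x i) * (C $ x $ j + C $ x $ x * (kron y j - kron x j))" for y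
    by (simp add: mult_Tmat_nth transpose_Tmat_mult_nth algebra_simps)
  have "(\<Sum>y\<in>UNIV. q y * (transpose (Tmat x y) ** C ** Tmat x y) $ i $ j)
      = (\<Sum>y\<in>UNIV. q y) * (C $ i $ j - C $ i $ x * kron x j - kron x i * C $ x $ j + kron x i * C $ x $ x * kron x j)
        + (\<Sum>y\<in>UNIV. q y * kron y j) * (C $ i $ x - C $ x $ x * kron x i)
        + (\<Sum>y\<in>UNIV. q y * kron y i) * (C $ x $ j - C $ x $ x * kron x j)
        + (\<Sum>y\<in>UNIV. (q y * kron y j) * kron y i) * C $ x $ x"
    by (simp add: TCT algebra_simps sum.distrib sum_subtractf sum_distrib_left sum_distrib_right)
  then show ?thesis
    by (simp only: q1 sum_times_kron) (simp add: algebra_simps kron_sym)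
qed

lemma Lop_nth:
  fixes Q :: "real^'e^'e" and C :: "complex^'e^'e"
  assumes sym: "\<forall>x y. Q $ x $ y = Q $ y $ x" and rows: "\<forall>x. (\<Sum>y\<in>UNIV. Q $ x $ y) = 1"
  shows "Lop Q C $ i $ j = of_real (1 / real CARD('e)) * (of_nat CARD('e) * C $ i $ j - 2 * C $ i $ j
     + (\<Sum>k\<in>UNIV. C $ i $ k * of_real (Q $ k $ j)) + (\<Sum>k\<in>UNIV. of_real (Q $ i $ k) * C $ k $ j)
     + kron i j * ((\<Sum>k\<in>UNIV. of_real (Q $ i $ k) * C $ k $ k) + C $ i $ i)
     - of_real (Q $ i $ j) * (C $ i $ i + C $ j $ j))"
proof -
  define q where "q a b = complex_of_real (Q $ a $ b)" for a b
  have q1: "(\<Sum>y\<in>UNIV. q x y) = 1" for x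
    using rows by (simp add: q_def flip: of_real_sum)
  have q_sym: "q a b = q b a" for a b
    using sym by (simp add: q_def)
  have "Lop Q C $ i $ j = of_real (1 / real CARD('e)) *
      (\<Sum>x\<in>UNIV. \<Sum>y\<in>UNIV. q x y * (transpose (Tmat x y) ** C ** Tmat x y) $ i $ j)"
    unfolding Lop_def
    by (simp only: sum_component vector_scaleR_component)
      (simp add: scaleR_complex sum_distrib_left q_def algebra_simps)
  also have "(\<Sum>x\<in>UNIV. \<Sum>y\<in>UNIV. q x y * (transpose (Tmat x y) ** C ** Tmat x y) $ i $ j)
     = (\<Sum>x\<in>(UNIV::'e set). C $ i $ j) - (\<Sum>x\<in>UNIV. C $ i $ x * kron x j)
       - (\<Sum>x\<in>UNIV. kron x i * C $ x $ j) + (\<Sum>x\<in>UNIV. kron x i * (C $ x $ x * kron x j))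
       + (\<Sum>x\<in>UNIV. C $ i $ x * q x j) - (\<Sum>x\<in>UNIV. kron x i * (C $ x $ x * q x j))
       + (\<Sum>x\<in>UNIV. C $ x $ j * q x i) - (\<Sum>x\<in>UNIV. C $ x $ x * q x i * kron x j)
       + (\<Sum>x\<in>UNIV. C $ x $ x * q x i) * kron i j"
    by (simp only: sum_weighted_TCT[OF q1])
      (simp add: algebra_simps sum.distrib sum_subtractf sum_distrib_left sum_distrib_right)
  also have "\<dots> = of_nat CARD('e) * C $ i $ j - 2 * C $ i $ j + kron i j * C $ i $ i
     + (\<Sum>x\<in>UNIV. C $ i $ x * q x j) - C $ i $ i * q i j + (\<Sum>x\<in>UNIV. q i x * C $ x $ j)
     - C $ j $ j * q i j + (\<Sum>x\<in>UNIV. q i x * C $ x $ x) * kron i j"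
    by (simp only: sum_times_kron sum_kron_times) (simp add: q_sym mult.commute)
  finally show ?thesis by (simp add: q_def algebra_simps)
qed

lemma L0op_nth:
  fixes Q :: "real^'e^'e" and C :: "complex^'e^'e"
  shows "L0op Q C $ i $ j = of_real ((real CARD('e) - 2) / real CARD('e)) * C $ i $ j
    + of_real (1 / real CARD('e)) * ((\<Sum>k\<in>UNIV. C $ i $ k * of_real (Q $ k $ j))
      + (\<Sum>k\<in>UNIV. of_real (Q $ i $ k) * C $ k $ j))
    - 2 * trace C / of_real (real CARD('e) ^ 2) * of_real (Q $ i $ j)
    + 2 * trace C / of_real (real CARD('e) ^ 2) * kron i j"
  by (simp add: L0op_def Let_def cscale_def cmat_def matrix_matrix_mult_def mat_def kron_def
      scaleR_complex)

text \<open>Hence the entries of D = L - L0: the terms C, CQ and QC cancel and only terms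
  involving diagonal entries and the trace survive.\<close>

lemma Lop_minus_L0op_nth:
  fixes Q :: "real^'e^'e" and C :: "complex^'e^'e"
  assumes sym: "\<forall>x y. Q $ x $ y = Q $ y $ x" and rows: "\<forall>x. (\<Sum>y\<in>UNIV. Q $ x $ y) = 1"
  shows "(Lop Q C - L0op Q C) $ i $ j = of_real (1 / real CARD('e))
       * (kron i j * ((\<Sum>k\<in>UNIV. of_real (Q $ i $ k) * C $ k $ k) + C $ i $ i)
          - of_real (Q $ i $ j) * (C $ i $ i + C $ j $ j))
     + 2 * trace C / of_real (real CARD('e) ^ 2) * (of_real (Q $ i $ j) - kron i j)"
  unfolding vector_minus_component Lop_nth[OF sym rows] L0op_nth
  by (simp add: field_simps)

lemma Lop_linear:
  fixes Q :: "real^'e^'e"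
  assumes sym: "\<forall>x y. Q $ x $ y = Q $ y $ x" and rows: "\<forall>x. (\<Sum>y\<in>UNIV. Q $ x $ y) = 1"
  shows "linear (Lop Q)"
proof (rule linearI)
  fix b1 b2 :: "complex^'e^'e"
  show "Lop Q (b1 + b2) = Lop Q b1 + Lop Q b2"
    by (simp add: vec_eq_iff Lop_nth[OF sym rows] algebra_simps sum.distrib)
next
  fix r and b :: "complex^'e^'e"
  show "Lop Q (r *\<^sub>R b) = r *\<^sub>R Lop Q b"
    by (simp add: vec_eq_iff Lop_nth[OF sym rows] scaleR_complex algebra_simps sum_distrib_left)
qed

lemma L0op_linear: "linear (L0op (Q :: real^'e^'e))"
proof (rule linearI)
  fix b1 b2 :: "complex^'e^'e"
  show "L0op Q (b1 + b2) = L0op Q b1 + L0op Q b2"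
    by (simp add: vec_eq_iff L0op_nth trace_add sum.distrib field_simps)
next
  fix r and b :: "complex^'e^'e"
  have "trace (r *\<^sub>R b) = of_real r * trace b"
    by (simp add: trace_def scaleR_complex sum_distrib_left)
  then show "L0op Q (r *\<^sub>R b) = r *\<^sub>R L0op Q b"
    by (simp add: vec_eq_iff L0op_nth scaleR_complex algebra_simps sum_distrib_left)
qed

lemma linear_funpow:
  fixes f :: "'a::real_vector \<Rightarrow> 'a"
  assumes "linear f"
  shows "linear (f ^^ j)"
proof (induction j)
  case 0
  show ?case by (simp add: linear_iff)
next
  case (Suc j)
  then have "linear (f \<circ> (f ^^ j))" using assms by (intro linear_compose)
  then show ?case by (simp add: comp_def)
qed

text \<open>Telescoping the difference of two iterates: replace g by f one step at a time.
  Only f needs to be linear.\<close>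

lemma funpow_diff_telescope:
  fixes f g :: "'a::real_vector \<Rightarrow> 'a"
  assumes "linear f"
  shows "(f ^^ n) x - (g ^^ n) x
    = (\<Sum>j<n. (f ^^ j) (f ((g ^^ (n - Suc j)) x) - (g ^^ (n - j)) x))"
proof -
  define h where "h k = (f ^^ k) ((g ^^ (n - k)) x)" for k
  have "(\<Sum>j<n. (f ^^ j) (f ((g ^^ (n - Suc j)) x) - (g ^^ (n - j)) x)) = (\<Sum>j<n. h (Suc j) - h j)"
  proof (rule sum.cong)
    fix j assume "j \<in> {..<n}"
    then show "(f ^^ j) (f ((g ^^ (n - Suc j)) x) - (g ^^ (n - j)) x) = h (Suc j) - h j"
      unfolding linear_diff[OF linear_funpow[OF assms]] h_def funpow_Suc_right by simp
  qed simp
  also have "\<dots> = h n - h 0" by (rule sum_lessThan_telescope)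
  finally show ?thesis by (simp add: h_def)
qed

lemma cmat_mult: "cmat (A ** B) = cmat A ** cmat B"
  by (simp add: vec_eq_iff cmat_def matrix_matrix_mult_def)

lemma cmat_one: "cmat (mat 1) = mat 1"
  by (simp add: vec_eq_iff cmat_def mat_def)

lemma cscale_of_real: "cscale (of_real r) M = r *\<^sub>R M"
  by (simp add: vec_eq_iff cscale_def scaleR_complex)

lemma matpow_commute: "matpow Q s ** Q = Q ** matpow Q s"
proof (induction s)
  case (Suc s)
  have "matpow Q (Suc s) ** Q = (Q ** matpow Q s) ** Q" by (simp add: Suc.IH)
  also have "\<dots> = Q ** matpow Q (Suc s)" by (simp add: matrix_mul_assoc)
  finally show ?case .
qed simp

lemma L0op_matpow:
  fixes Q :: "real^'e^'e"
  defines "N \<equiv> real CARD('e)"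
  shows "L0op Q (cmat (matpow Q s)) = ((N - 2) / N) *\<^sub>R cmat (matpow Q s)
     + (2 / N) *\<^sub>R cmat (matpow Q (Suc s))
     - (2 * trace (matpow Q s) / N^2) *\<^sub>R cmat Q + (2 * trace (matpow Q s) / N^2) *\<^sub>R mat 1"
proof -
  have right: "cmat (matpow Q s) ** cmat Q = cmat (matpow Q (Suc s))"
    by (simp add: cmat_mult)
  have left: "cmat Q ** cmat (matpow Q s) = cmat (matpow Q (Suc s))"
    by (simp add: cmat_mult[symmetric] matpow_commute)
  have tr: "2 * trace (cmat (matpow Q s)) / of_real (N^2) = complex_of_real (2 * trace (matpow Q s) / N^2)"
    by (simp add: trace_cmat)
  have "(1 / N) *\<^sub>R (X + X) = (2 / N) *\<^sub>R X" for X :: "complex^'e^'e"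
    by (simp add: scaleR_add_right[symmetric] scaleR_2[symmetric])
  then show ?thesis
    unfolding L0op_def Let_def N_def[symmetric] right left tr cscale_of_real by simp
qed

text \<open>A symmetric matrix with unit row sums fixes J from both sides; hence L0 acts on J
  only through its trace terms.\<close>

lemma cmat_mult_Jmat:
  fixes Q :: "real^'e^'e"
  assumes sym: "\<forall>x y. Q $ x $ y = Q $ y $ x" and rows: "\<forall>x. (\<Sum>y\<in>UNIV. Q $ x $ y) = 1"
  shows "cmat Q ** Jmat = Jmat" "Jmat ** cmat Q = Jmat"
proof -
  have row: "(\<Sum>k\<in>UNIV. complex_of_real (Q $ i $ k)) = 1" for i
    using rows by (simp flip: of_real_sum)
  have col: "(\<Sum>k\<in>UNIV. complex_of_real (Q $ k $ i)) = 1" for i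
    using row[of i] sym by simp
  show "cmat Q ** Jmat = Jmat"
    by (simp add: vec_eq_iff matrix_matrix_mult_def cmat_def Jmat_def sum_divide_distrib[symmetric] row)
  show "Jmat ** cmat Q = Jmat"
    by (simp add: vec_eq_iff matrix_matrix_mult_def cmat_def Jmat_def sum_divide_distrib[symmetric] col)
qed

lemma trace_Jmat: "trace (Jmat :: complex^'e^'e) = 1"
  by (simp add: trace_def Jmat_def)

lemma L0op_Jmat:
  fixes Q :: "real^'e^'e"
  assumes sym: "\<forall>x y. Q $ x $ y = Q $ y $ x" and rows: "\<forall>x. (\<Sum>y\<in>UNIV. Q $ x $ y) = 1"
  defines "N \<equiv> real CARD('e)"
  shows "L0op Q Jmat = Jmat + (2 / N^2) *\<^sub>R (mat 1 - cmat Q)"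
proof -
  have tr: "2 * trace (Jmat :: complex^'e^'e) / of_real (N^2) = complex_of_real (2 / N^2)"
    by (simp add: trace_Jmat)
  have "((N - 2) / N) *\<^sub>R Jmat + (1 / N) *\<^sub>R (Jmat + Jmat) = ((N - 2) / N + 2 / N) *\<^sub>R (Jmat :: complex^'e^'e)"
    by (simp add: scaleR_add_right[symmetric] scaleR_2[symmetric] scaleR_add_left)
  also have "(N - 2) / N + 2 / N = 1" by (simp add: N_def field_simps)
  finally have J: "((N - 2) / N) *\<^sub>R Jmat + (1 / N) *\<^sub>R (Jmat + Jmat) = (Jmat :: complex^'e^'e)"
    by simp
  show ?thesis
    unfolding L0op_def Let_def N_def[symmetric] cmat_mult_Jmat[OF sym rows] tr cscale_of_real J cmat_one
    by (simp add: scaleR_diff_right)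
qed

text \<open>alpha(m, s) vanishes for s > m, so the series in its definition are finite sums.\<close>

lemma alpha_vanishes: "m < s \<Longrightarrow> alpha Q m s = 0"
proof (induction m arbitrary: s)
  case (Suc m)
  then show ?case by (simp add: Let_def)
qed simp

lemma alpha_trace_series:
  "(\<Sum>t. alpha Q m (Suc t) * trace (matpow Q (Suc t)))
     = (\<Sum>t<m. alpha Q m (Suc t) * trace (matpow Q (Suc t)))"
  by (rule suminf_finite) (auto simp: alpha_vanishes)

text \<open>The recursion defining alpha, read as an identity between linear combinations of an
  arbitrary sequence of vectors P s (later P s = Q^s): it splits into the part coming from
  (N-2)/N C, the shift part coming from CQ + QC, and the trace part along I - Q.\<close>

lemma alpha_Suc_combination:
  fixes Q :: "real^'e^'e" and P :: "nat \<Rightarrow> 'v::real_vector"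
  defines "N \<equiv> real CARD('e)"
  shows "(\<Sum>s\<le>Suc m. alpha Q (Suc m) s *\<^sub>R P s)
    = (\<Sum>s\<le>m. ((N - 2) / N * alpha Q m s) *\<^sub>R P s) + (\<Sum>s\<le>m. (2 / N * alpha Q m s) *\<^sub>R P (Suc s))
      + (2 / N^2 + (\<Sum>s\<le>m. alpha Q m s * (2 * trace (matpow Q s) / N^2))) *\<^sub>R (P 0 - P 1)"
proof -
  define a where "a = alpha Q m"
  define K where "K = 2 / N^2 + (\<Sum>s\<le>m. a s * (2 * trace (matpow Q s) / N^2))"
  have N: "N \<noteq> 0" by (simp add: N_def)
  have trace_sum: "(\<Sum>s\<le>m. a s * (2 * trace (matpow Q s) / N^2))
      = 2 / N * a 0 + 2 / N^2 * (\<Sum>t. a (Suc t) * trace (matpow Q (Suc t)))"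
  proof -
    have "(\<Sum>s\<le>m. a s * (2 * trace (matpow Q s) / N^2))
        = a 0 * (2 * trace (mat 1 :: real^'e^'e) / N^2) + (\<Sum>t<m. a (Suc t) * (2 * trace (matpow Q (Suc t)) / N^2))"
      by (simp add: sum.atMost_shift)
    also have "a 0 * (2 * trace (mat 1 :: real^'e^'e) / N^2) = 2 / N * a 0"
      using N by (simp add: trace_I N_def[symmetric] power2_eq_square)
    also have "(\<Sum>t<m. a (Suc t) * (2 * trace (matpow Q (Suc t)) / N^2))
        = 2 / N^2 * (\<Sum>t. a (Suc t) * trace (matpow Q (Suc t)))"
      unfolding a_def alpha_trace_series sum_distrib_left by (rule sum.cong) simp_all
    finally show ?thesis .
  qed
  have coeff: "alpha Q (Suc m) s = (N - 2) / N * a s + (if s = 0 then 0 else 2 / N * a (s - 1))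
     + (if s = 0 then K else if s = 1 then - K else 0)" for s
    unfolding K_def trace_sum unfolding a_def using N by (auto simp: Let_def N_def[symmetric] field_simps)
  have old: "(\<Sum>s\<le>Suc m. ((N - 2) / N * a s) *\<^sub>R P s) = (\<Sum>s\<le>m. ((N - 2) / N * a s) *\<^sub>R P s)"
    by (simp add: a_def alpha_vanishes)
  have shifted: "(\<Sum>s\<le>Suc m. (if s = 0 then 0 else 2 / N * a (s - 1)) *\<^sub>R P s)
      = (\<Sum>s\<le>m. (2 / N * a s) *\<^sub>R P (Suc s))"
    by (simp add: sum.atMost_shift lessThan_Suc_atMost)
  have trace_part: "(\<Sum>s\<le>Suc m. (if s = 0 then K else if s = 1 then - K else 0) *\<^sub>R P s)
      = K *\<^sub>R (P 0 - P 1)"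
    by (simp add: sum.atMost_shift sum.lessThan_Suc_shift scaleR_diff_right del: sum.lessThan_Suc)
  show ?thesis
    unfolding coeff scaleR_add_left sum.distrib old shifted trace_part
    by (simp add: K_def a_def scaleR_add_left)
qed

lemma L0op_Jmat_plus_powers:
  fixes Q :: "real^'e^'e" and a :: "nat \<Rightarrow> real"
  assumes sym: "\<forall>x y. Q $ x $ y = Q $ y $ x" and rows: "\<forall>x. (\<Sum>y\<in>UNIV. Q $ x $ y) = 1"
  defines "N \<equiv> real CARD('e)"
  shows "L0op Q (Jmat + (\<Sum>s\<le>m. a s *\<^sub>R cmat (matpow Q s)))
    = Jmat + ((\<Sum>s\<le>m. ((N - 2) / N * a s) *\<^sub>R cmat (matpow Q s))
      + (\<Sum>s\<le>m. (2 / N * a s) *\<^sub>R cmat (matpow Q (Suc s)))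
      + (2 / N^2 + (\<Sum>s\<le>m. a s * (2 * trace (matpow Q s) / N^2)))
          *\<^sub>R (cmat (matpow Q 0) - cmat (matpow Q 1)))"
proof -
  have lin: "linear (L0op Q)" by (rule L0op_linear)
  have P01: "cmat (matpow Q 0) - cmat (matpow Q 1) = mat 1 - cmat Q"
    by (simp add: cmat_one)
  have scaled_step: "a s *\<^sub>R L0op Q (cmat (matpow Q s)) = ((N - 2) / N * a s) *\<^sub>R cmat (matpow Q s)
     + (2 / N * a s) *\<^sub>R cmat (matpow Q (Suc s))
     + (a s * (2 * trace (matpow Q s) / N^2)) *\<^sub>R (mat 1 - cmat Q)" for s
    unfolding L0op_matpow N_def by (simp add: algebra_simps)
  have "L0op Q (Jmat + (\<Sum>s\<le>m. a s *\<^sub>R cmat (matpow Q s)))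
      = L0op Q Jmat + (\<Sum>s\<le>m. a s *\<^sub>R L0op Q (cmat (matpow Q s)))"
    by (simp only: linear_add[OF lin] linear_sum[OF lin] linear_scale[OF lin])
  also have "\<dots> = Jmat + (2 / N^2) *\<^sub>R (mat 1 - cmat Q)
      + ((\<Sum>s\<le>m. ((N - 2) / N * a s) *\<^sub>R cmat (matpow Q s))
      + (\<Sum>s\<le>m. (2 / N * a s) *\<^sub>R cmat (matpow Q (Suc s)))
      + (\<Sum>s\<le>m. a s * (2 * trace (matpow Q s) / N^2)) *\<^sub>R (mat 1 - cmat Q))"
    by (simp only: scaled_step sum.distrib L0op_Jmat[OF sym rows] N_def[symmetric] cmat_one
        scaleR_sum_left)
  finally show ?thesis
    unfolding P01 by (simp add: scaleR_add_left)
qed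

lemma L0op_power_Jmat:
  fixes Q :: "real^'e^'e"
  assumes sym: "\<forall>x y. Q $ x $ y = Q $ y $ x" and rows: "\<forall>x. (\<Sum>y\<in>UNIV. Q $ x $ y) = 1"
  shows "(L0op Q ^^ m) Jmat = Jmat + (\<Sum>s\<le>m. alpha Q m s *\<^sub>R cmat (matpow Q s))"
proof (induction m)
  case (Suc m)
  then show ?case
    by (simp only: funpow.simps comp_apply L0op_Jmat_plus_powers[OF sym rows]
        alpha_Suc_combination)
qed simp

lemma Lop_minus_L0op_Jmat:
  fixes Q :: "real^'e^'e"
  assumes sym: "\<forall>x y. Q $ x $ y = Q $ y $ x" and rows: "\<forall>x. (\<Sum>y\<in>UNIV. Q $ x $ y) = 1"
  shows "Lop Q Jmat - L0op Q Jmat = 0"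
proof -
  have N: "real CARD('e) \<noteq> 0" by simp
  have row: "(\<Sum>k\<in>UNIV. complex_of_real (Q $ i $ k) / of_nat CARD('e)) = 1 / of_nat CARD('e)" for i
    using rows by (simp add: sum_divide_distrib[symmetric] flip: of_real_sum)
  show ?thesis
    unfolding vec_eq_iff Lop_minus_L0op_nth[OF sym rows] trace_Jmat
    using N by (simp add: Jmat_def row field_simps kron_def power2_eq_square)
qed

lemma Lop_minus_L0op_matpow:
  fixes Q :: "real^'e^'e"
  assumes sym: "\<forall>x y. Q $ x $ y = Q $ y $ x" and rows: "\<forall>x. (\<Sum>y\<in>UNIV. Q $ x $ y) = 1"
  shows "Lop Q (cmat (matpow Q s)) - L0op Q (cmat (matpow Q s)) = bracket Q s"
proof -
  have N: "real CARD('e) \<noteq> 0" by simp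
  have QDJ: "(cmat Q ** diagm (cmat (matpow Q s)) ** Jmat) $ i $ i =
     (\<Sum>k\<in>UNIV. of_real (Q $ i $ k) * cmat (matpow Q s) $ k $ k) / of_nat CARD('e)" for i
    unfolding matrix_matrix_mult_def[of "cmat Q ** diagm (cmat (matpow Q s))" Jmat]
    by (simp add: mult_diagm_nth Jmat_def sum_divide_distrib cmat_nth)
  show ?thesis
    unfolding vec_eq_iff Lop_minus_L0op_nth[OF sym rows] trace_cmat
    using N by (simp add: bracket_def Let_def diagm_nth QDJ diagm_mult_nth mult_diagm_nth
        scaleR_complex cmat_nth field_simps kron_def power2_eq_square mat_def)
qed

theorem lemma4p7:
  fixes Q :: "real^'e^'e" and n :: nat
  assumes "CARD('e) > 8"
    and "stochastic Q" and "irreducible_mat Q"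
    and "\<forall>x y. Q $ x $ y = Q $ y $ x"
    and "trace Q = 0"
    and "n \<ge> 1"
  shows "(Lop Q ^^ n) Jmat - (L0op Q ^^ n) Jmat = (\<Sum>j<n. (Lop Q ^^ j) (eta Q (n - j)))
    \<and> eta Q n = (\<Sum>s. alpha Q (n - 1) s *\<^sub>R bracket Q s)"
proof
  have sym: "\<forall>x y. Q $ x $ y = Q $ y $ x" using assms(4) .
  have rows: "\<forall>x. (\<Sum>y\<in>UNIV. Q $ x $ y) = 1" using assms(2) by (simp add: stochastic_def)
  have eta_shift: "eta Q (n - j) = Lop Q ((L0op Q ^^ (n - Suc j)) Jmat) - (L0op Q ^^ (n - j)) Jmat" for j
    unfolding eta_def Suc_eq_plus1 diff_diff_left ..
  show "(Lop Q ^^ n) Jmat - (L0op Q ^^ n) Jmat = (\<Sum>j<n. (Lop Q ^^ j) (eta Q (n - j)))"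
    unfolding funpow_diff_telescope[OF Lop_linear[OF sym rows]] eta_shift ..
  obtain m where n: "n = Suc m" using assms(6) by (cases n) auto
  have linD: "linear (\<lambda>C. Lop Q C - L0op Q C)"
    by (rule linear_compose_sub[OF Lop_linear[OF sym rows] L0op_linear])
  have "eta Q n = Lop Q ((L0op Q ^^ m) Jmat) - L0op Q ((L0op Q ^^ m) Jmat)"
    by (simp add: eta_def n)
  also have "\<dots> = (Lop Q Jmat - L0op Q Jmat)
      + (\<Sum>s\<le>m. alpha Q m s *\<^sub>R (Lop Q (cmat (matpow Q s)) - L0op Q (cmat (matpow Q s))))"
    unfolding L0op_power_Jmat[OF sym rows] linear_add[OF linD] linear_sum[OF linD]
      linear_scale[OF linD] ..
  also have "\<dots> = (\<Sum>s\<le>m. alpha Q m s *\<^sub>R bracket Q s)"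
    by (simp add: Lop_minus_L0op_Jmat[OF sym rows] Lop_minus_L0op_matpow[OF sym rows])
  also have "\<dots> = (\<Sum>s. alpha Q (n - 1) s *\<^sub>R bracket Q s)"
    unfolding n diff_Suc_1 by (rule suminf_finite[symmetric]) (auto simp: alpha_vanishes)
  finally show "eta Q n = (\<Sum>s. alpha Q (n - 1) s *\<^sub>R bracket Q s)" .
qed

end
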